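(* Let $\mu$ be an odd positive integer. Then there exists a cyclic DCA$(4,6\mu+5;6\mu+4)$ satisfying P1 and P2.
   Context: Let $(G,+)$ be an abelian group of order $n$. A difference covering array DCA$(k,\eta;n)$ over $G$ is an $\eta\times k$ matrix $Q=[q(i,j)]$ (rows indexed $0,\dots,\eta-1$, columns $0,\dots,k-1$) with entries in $G$ such that for every pair of distinct columns $j,j'$ the multiset $\{q(i,j)-q(i,j') : 0\le i\le \eta-1\}$ contains every element of $G$ at least once. It is cyclic if $G=\mathbb{Z}_n$. A DCA$(k,n+1;n)$ is taken in normalized form: all entries of its last row (row $n$) and of its last column (column $k-1$) equal $0$. Such a DCA satisfies P1 if $0$ occurs at least twice in every column, and satisfies P2 if for all distinct columns $j,j'$ with $j\neq k-1\neq j'$, the set $\{q(i,j)-q(i,j') : 0\le i\le n-1\}$ equals $G\setminus\{0\}$. *)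

theory Defs
  imports Main
begin

text \<open>Elements of Z_n are represented by
  integers in {0..<n}; subtraction in Z_n is integer subtraction followed by mod n.
  A matrix is a function Q :: nat => nat => int, Q i j = entry in row i, column j,
  rows 0..eta-1, columns 0..k-1.\<close>

definition cyclic_DCA :: "nat \<Rightarrow> nat \<Rightarrow> nat \<Rightarrow> (nat \<Rightarrow> nat \<Rightarrow> int) \<Rightarrow> bool" where
  "cyclic_DCA k eta n Q \<longleftrightarrow>
     (\<forall>i<eta. \<forall>j<k. 0 \<le> Q i j \<and> Q i j < int n) \<and>
     (\<forall>j<k. \<forall>j'<k. j \<noteq> j' \<longrightarrow>
        (\<forall>g\<in>{0..<int n}. \<exists>i<eta. (Q i j - Q i j') mod int n = g))"

definition DCA_normalized :: "nat \<Rightarrow> nat \<Rightarrow> (nat \<Rightarrow> nat \<Rightarrow> int) \<Rightarrow> bool" where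
  "DCA_normalized k n Q \<longleftrightarrow> (\<forall>j<k. Q n j = 0) \<and> (\<forall>i<n+1. Q i (k-1) = 0)"

definition DCA_P1 :: "nat \<Rightarrow> nat \<Rightarrow> (nat \<Rightarrow> nat \<Rightarrow> int) \<Rightarrow> bool" where
  "DCA_P1 k n Q \<longleftrightarrow> (\<forall>j<k. card {i. i < n+1 \<and> Q i j = 0} \<ge> 2)"

definition DCA_P2 :: "nat \<Rightarrow> nat \<Rightarrow> (nat \<Rightarrow> nat \<Rightarrow> int) \<Rightarrow> bool" where
  "DCA_P2 k n Q \<longleftrightarrow> (\<forall>j<k. \<forall>j'<k. j \<noteq> j' \<and> j \<noteq> k-1 \<and> j' \<noteq> k-1 \<longrightarrow>
      (\<lambda>i. (Q i j - Q i j') mod int n) ` {0..<n} = {1..<int n})"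

end

theory Submission
  imports Defs
begin

text \<open>Write \<open>n = 6\<mu> + 4 = 2m\<close> with \<open>m = 3\<mu> + 2\<close> odd, so that \<open>\<int>\<^sub>n \<cong> \<int>\<^sub>2 \<times> \<int>\<^sub>m\<close>.
  Index the first \<open>n\<close> rows by pairs \<open>(s, u) \<in> \<int>\<^sub>2 \<times> \<int>\<^sub>m\<close>, let the three non-zero columns
  have the \<open>\<int>\<^sub>m\<close>-components \<open>u\<close>, \<open>2u + 2s\<close>, \<open>3u + \<mu> + 2 + 2s\<close> and suitable
  \<open>\<int>\<^sub>2\<close>-components, and let the last column and the last row be zero.
  For any two of these columns, the \<open>\<int>\<^sub>m\<close>-component of the difference is, on each of the two
  sheets \<open>s = 0\<close> and \<open>s = 1\<close>, a bijective affine function of \<open>u\<close>; so every \<open>d \<in> \<int>\<^sub>m\<close> is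
  attained once on each sheet. The \<open>\<int>\<^sub>2\<close>-components are chosen so that the two parities differ
  when \<open>d \<noteq> 0\<close> and are both \<open>1\<close> when \<open>d = 0\<close>: then the differences run exactly through the
  non-zero elements of \<open>\<int>\<^sub>n\<close>, which is P2, and the last row supplies the difference \<open>0\<close>.
  A single column is treated in the same way, with parities that always differ.\<close>

lemma mod_double_eq_iff:
  fixes a b m :: int
  assumes "odd m"
  shows "a mod (2*m) = b mod (2*m) \<longleftrightarrow> a mod 2 = b mod 2 \<and> a mod m = b mod m"
proof -
  have "coprime 2 m" using assms by simp
  then show ?thesis
    by (auto simp: mod_eq_dvd_iff divides_mult dest: dvd_mult_left dvd_mult_right)
qed

definition crt_lift :: "int \<Rightarrow> int \<Rightarrow> int \<Rightarrow> int" where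
  "crt_lift m z w = (if w mod m mod 2 = z mod 2 then w mod m else w mod m + m)"

lemma crt_lift:
  fixes m z w :: int
  assumes "odd m" "m > 0"
  shows "0 \<le> crt_lift m z w" "crt_lift m z w < 2*m"
    and "crt_lift m z w mod 2 = z mod 2" "crt_lift m z w mod m = w mod m"
proof -
  have "0 \<le> w mod m" "w mod m < m" using assms(2) by simp_all
  moreover have "(x + m) mod 2 = z mod 2" if "x mod 2 \<noteq> z mod 2" for x
    using assms(1) that by presburger
  ultimately show "0 \<le> crt_lift m z w" "crt_lift m z w < 2*m"
    and "crt_lift m z w mod 2 = z mod 2" "crt_lift m z w mod m = w mod m"
    unfolding crt_lift_def by auto
qed

lemma crt_bij_betw:
  fixes m :: int
  assumes "odd m" "m > 0"
  shows "bij_betw (\<lambda>x. (x mod 2, x mod m)) {0..<2*m} ({0,1} \<times> {0..<m})"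
proof (rule bij_betw_imageI)
  show "inj_on (\<lambda>x. (x mod 2, x mod m)) {0..<2*m}"
    by (intro inj_onI) (auto simp: mod_double_eq_iff[OF assms(1), symmetric])
  show "(\<lambda>x. (x mod 2, x mod m)) ` {0..<2*m} = {0,1} \<times> {0..<m}"
  proof (intro equalityI subsetI)
    fix p :: "int \<times> int" assume "p \<in> {0,1} \<times> {0..<m}"
    then obtain z w where "p = (z, w)" "z \<in> {0,1}" "0 \<le> w" "w < m" by auto
    then show "p \<in> (\<lambda>x. (x mod 2, x mod m)) ` {0..<2*m}"
      using crt_lift[OF assms, of z w] by (auto intro!: image_eqI[of _ _ "crt_lift m z w"])
  qed (use assms in auto)
qed

lemma row_bij_betw:
  fixes m :: int
  assumes "m > 0"
  shows "bij_betw (\<lambda>i. (int i div m, int i mod m)) {i. int i < 2*m} ({0,1} \<times> {0..<m})"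
proof (rule bij_betw_imageI)
  show "inj_on (\<lambda>i. (int i div m, int i mod m)) {i. int i < 2*m}"
    by (intro inj_onI) (metis div_mult_mod_eq of_nat_eq_iff prod.inject)
  show "(\<lambda>i. (int i div m, int i mod m)) ` {i. int i < 2*m} = {0,1} \<times> {0..<m}"
  proof (intro equalityI subsetI)
    fix p :: "int \<times> int" assume "p \<in> (\<lambda>i. (int i div m, int i mod m)) ` {i. int i < 2*m}"
    then obtain i where "p = (int i div m, int i mod m)" "int i < 2*m" by auto
    moreover have "int i div m * m < 2 * m"
      using \<open>int i < 2*m\<close> div_mult_mod_eq[of "int i" m] pos_mod_sign[OF assms, of "int i"] by linarith
    then have "int i div m < 2" using assms by simp
    moreover have "0 \<le> int i div m" using assms by (simp add: pos_imp_zdiv_nonneg_iff)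
    ultimately show "p \<in> {0,1} \<times> {0..<m}" using assms by auto
  next
    fix p :: "int \<times> int" assume "p \<in> {0,1} \<times> {0..<m}"
    then obtain s u where "p = (s, u)" "s \<in> {0,1}" "0 \<le> u" "u < m" by auto
    then show "p \<in> (\<lambda>i. (int i div m, int i mod m)) ` {i. int i < 2*m}"
      by (auto simp: div_add_self1 intro!: image_eqI[of _ _ "nat (s*m + u)"])
  qed
qed

text \<open>Row \<open>i < 2m\<close> of an array is the row \<open>(i div m, i mod m)\<close>.\<close>

definition sheet_pairs :: "int \<Rightarrow> (int \<Rightarrow> int \<Rightarrow> int) \<Rightarrow> (int \<Rightarrow> int \<Rightarrow> int) \<Rightarrow> (int \<times> int) set" where
  "sheet_pairs m a b = (\<lambda>(s, u). (a s u mod 2, b s u mod m)) ` ({0,1} \<times> {0..<m})"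

lemma sheet_pairs_subset:
  assumes "0 < m"
  shows "sheet_pairs m a b \<subseteq> {0,1} \<times> {0..<m}"
proof
  fix p assume "p \<in> sheet_pairs m a b"
  then obtain s u where "p = (a s u mod 2, b s u mod m)" by (auto simp: sheet_pairs_def)
  moreover have "x mod 2 \<in> {0, 1}" for x :: int by auto
  ultimately show "p \<in> {0,1} \<times> {0..<m}" using assms by auto
qed

lemma sheet_pairs_memI:
  assumes "s \<in> {0,1}" "0 \<le> u" "u < m"
  shows "(a s u mod 2, b s u mod m) \<in> sheet_pairs m a b"
  using assms unfolding sheet_pairs_def by (intro image_eqI[of _ _ "(s, u)"]) auto

lemma sheet_pairs_eq_allI:
  assumes "0 < m"
    and "\<And>z d. z \<in> {0,1} \<Longrightarrow> 0 \<le> d \<Longrightarrow> d < m \<Longrightarrow> (z, d) \<in> sheet_pairs m a b"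
  shows "sheet_pairs m a b = {0,1} \<times> {0..<m}"
  using sheet_pairs_subset[OF assms(1)] assms(2) by auto

lemma sheet_pairs_eq_nonzeroI:
  assumes "0 < m"
    and "\<And>s u. s \<in> {0,1} \<Longrightarrow> 0 \<le> u \<Longrightarrow> u < m \<Longrightarrow> a s u mod 2 \<noteq> 0 \<or> b s u mod m \<noteq> 0"
    and "(1, 0) \<in> sheet_pairs m a b"
    and "\<And>z d. z \<in> {0,1} \<Longrightarrow> 0 < d \<Longrightarrow> d < m \<Longrightarrow> (z, d) \<in> sheet_pairs m a b"
  shows "sheet_pairs m a b = {0,1} \<times> {0..<m} - {(0, 0)}"
proof -
  have zero: "(0, 0) \<notin> sheet_pairs m a b"
  proof
    assume "(0, 0) \<in> sheet_pairs m a b"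
    then obtain p where "p \<in> {0,1} \<times> {0..<m}" "(0, 0) = (\<lambda>(s, u). (a s u mod 2, b s u mod m)) p"
      unfolding sheet_pairs_def by (rule imageE)
    moreover obtain s u where "p = (s, u)" by (cases p)
    ultimately show False using assms(2)[of s u] by simp
  qed
  show ?thesis
  proof (intro equalityI subsetI)
    fix p :: "int \<times> int" assume p: "p \<in> {0,1} \<times> {0..<m} - {(0, 0)}"
    obtain z d where "p = (z, d)" by (cases p)
    with p show "p \<in> sheet_pairs m a b" using assms(3) assms(4)[of z d] by (cases "d = 0") auto
  qed (use sheet_pairs_subset[OF assms(1)] zero in auto)
qed

lemma two_sheet_cover:
  fixes a b :: "int \<Rightarrow> int \<Rightarrow> int"
  assumes "z \<in> {0,1}"
    and "0 \<le> u" "u < m" "b 0 u mod m = d"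
    and "0 \<le> u'" "u' < m" "b 1 u' mod m = d"
    and "a 0 u mod 2 \<noteq> a 1 u' mod 2"
  shows "(z, d) \<in> sheet_pairs m a b"
proof -
  have "a 0 u mod 2 = z \<or> a 1 u' mod 2 = z"
    using assms(1,8) by auto
  then show ?thesis
  proof
    assume "a 0 u mod 2 = z"
    then show ?thesis using sheet_pairs_memI[of 0 u m a b] assms by simp
  next
    assume "a 1 u' mod 2 = z"
    then show ?thesis using sheet_pairs_memI[of 1 u' m a b] assms by simp
  qed
qed

lemma image_mod_double_rows:
  fixes f :: "nat \<Rightarrow> int" and a b :: "int \<Rightarrow> int \<Rightarrow> int" and m :: int
  assumes "odd m" "m > 0"
    and components: "\<And>i. int i < 2*m \<Longrightarrow>
      f i mod 2 = a (int i div m) (int i mod m) mod 2 \<and> f i mod m = b (int i div m) (int i mod m) mod m"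
    and "S \<subseteq> {0..<2*m}"
    and "sheet_pairs m a b = (\<lambda>x. (x mod 2, x mod m)) ` S"
  shows "(\<lambda>i. f i mod (2*m)) ` {i. int i < 2*m} = S"
proof -
  let ?crt = "\<lambda>x. (x mod 2, x mod m)"
  let ?row = "\<lambda>i. (int i div m, int i mod m)"
  have crt_f: "?crt (f i mod (2*m)) = (\<lambda>(s, u). (a s u mod 2, b s u mod m)) (?row i)" if "int i < 2*m" for i
    using components[OF that] by (simp add: mod_mod_cancel)
  then have "?crt ` (\<lambda>i. f i mod (2*m)) ` {i. int i < 2*m}
      = (\<lambda>(s, u). (a s u mod 2, b s u mod m)) ` ?row ` {i. int i < 2*m}"
    unfolding image_image using crt_f by (intro image_cong) auto
  also have "\<dots> = ?crt ` S"
    using row_bij_betw[OF assms(2)] assms(5) by (simp add: bij_betw_def sheet_pairs_def)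
  finally show ?thesis
    using crt_bij_betw[OF assms(1,2)] assms(4)
    by (subst (asm) inj_on_image_eq_iff[of ?crt "{0..<2*m}"]) (auto simp: bij_betw_def)
qed

lemma image_mod_double_rows_all:
  fixes f :: "nat \<Rightarrow> int" and a b :: "int \<Rightarrow> int \<Rightarrow> int" and m :: int
  assumes "odd m" "m > 0"
    and "\<And>i. int i < 2*m \<Longrightarrow>
      f i mod 2 = a (int i div m) (int i mod m) mod 2 \<and> f i mod m = b (int i div m) (int i mod m) mod m"
    and "sheet_pairs m a b = {0,1} \<times> {0..<m}"
  shows "(\<lambda>i. f i mod (2*m)) ` {i. int i < 2*m} = {0..<2*m}"
  using assms crt_bij_betw[OF assms(1,2)]
  by (intro image_mod_double_rows) (auto simp: bij_betw_def)

lemma image_mod_double_rows_nonzero: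
  fixes f :: "nat \<Rightarrow> int" and a b :: "int \<Rightarrow> int \<Rightarrow> int" and m :: int
  assumes "odd m" "m > 0"
    and "\<And>i. int i < 2*m \<Longrightarrow>
      f i mod 2 = a (int i div m) (int i mod m) mod 2 \<and> f i mod m = b (int i div m) (int i mod m) mod m"
    and "sheet_pairs m a b = {0,1} \<times> {0..<m} - {(0, 0)}"
  shows "(\<lambda>i. f i mod (2*m)) ` {i. int i < 2*m} = {1..<2*m}"
proof -
  let ?crt = "\<lambda>x. (x mod 2, x mod m)"
  have "inj_on ?crt {0..<2*m}" "?crt ` {0..<2*m} = {0,1} \<times> {0..<m}"
    using crt_bij_betw[OF assms(1,2)] by (simp_all add: bij_betw_def)
  then have "?crt ` ({0..<2*m} - {0}) = {0,1} \<times> {0..<m} - {(0, 0)}"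
    using assms(2) by (subst inj_on_image_set_diff) auto
  moreover have "{0..<2*m} - {0} = {1..<2*m}" by auto
  ultimately show ?thesis
    using assms by (intro image_mod_double_rows[where a = a and b = b]) auto
qed

lemma image_uminus_mod:
  fixes f :: "'a \<Rightarrow> int" and n :: int
  assumes "(\<lambda>x. f x mod n) ` A = S" and "(\<lambda>y. (- y) mod n) ` S = S"
  shows "(\<lambda>x. (- f x) mod n) ` A = S"
proof -
  have "(\<lambda>x. (- f x) mod n) ` A = (\<lambda>y. (- y) mod n) ` (\<lambda>x. f x mod n) ` A"
    by (simp add: image_image mod_minus_eq)
  then show ?thesis using assms by simp
qed

lemma uminus_mod_image_nonzero: "(\<lambda>y. (- y) mod n) ` {1..<n} = {1..<n}" for n :: int
proof -
  have "(\<lambda>y. (- y) mod n) ` {1..<n} = (\<lambda>y. n - y) ` {1..<n}"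
    by (rule image_cong) (auto simp: zmod_zminus1_eq_if)
  also have "\<dots> = {1..<n}"
  proof (intro equalityI subsetI)
    fix y assume "y \<in> {1..<n}"
    then show "y \<in> (\<lambda>y. n - y) ` {1..<n}" by (intro image_eqI[of _ _ "n - y"]) auto
  qed auto
  finally show ?thesis .
qed

lemma uminus_mod_image_all: "(\<lambda>y. (- y) mod n) ` {0..<n} = {0..<n}" for n :: int
proof (cases "0 < n")
  case True
  then have "{0..<n} = insert 0 {1..<n}" by auto
  then show ?thesis using uminus_mod_image_nonzero[of n] by simp
qed simp

lemma cyclic_DCA_of_normalized_P2:
  assumes normalized: "DCA_normalized k n Q" and P2: "DCA_P2 k n Q"
    and bounds: "\<And>i j. i < n + 1 \<Longrightarrow> j < k \<Longrightarrow> 0 \<le> Q i j \<and> Q i j < int n"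
    and columns: "\<And>j. j < k - 1 \<Longrightarrow> (\<lambda>i. Q i j mod int n) ` {0..<n} = {0..<int n}"
  shows "cyclic_DCA k (n + 1) n Q"
  unfolding cyclic_DCA_def
proof (intro conjI allI impI ballI)
  fix i j assume "i < n + 1" "j < k"
  then show "0 \<le> Q i j" "Q i j < int n" using bounds by auto
next
  fix j j' g assume j: "j < k" "j' < k" "j \<noteq> j'" and g: "g \<in> {0..<int n}"
  have zero_row: "Q n j = 0" "Q n j' = 0" and zero_column: "\<And>i. i < n + 1 \<Longrightarrow> Q i (k - 1) = 0"
    using normalized j by (auto simp: DCA_normalized_def)
  consider (inner) "j \<noteq> k - 1" "j' \<noteq> k - 1" | (right) "j' = k - 1" | (left) "j = k - 1"
    by blast
  then show "\<exists>i<n + 1. (Q i j - Q i j') mod int n = g"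
  proof cases
    case inner
    show ?thesis
    proof (cases "g = 0")
      case True
      then show ?thesis using zero_row by (intro exI[of _ n]) auto
    next
      case False
      then have "g \<in> (\<lambda>i. (Q i j - Q i j') mod int n) ` {0..<n}"
        using P2 inner j g unfolding DCA_P2_def by auto
      then obtain i where "i < n" "(Q i j - Q i j') mod int n = g" by auto
      then show ?thesis by (intro exI[of _ i]) auto
    qed
  next
    case right
    then have "j < k - 1" using j by auto
    then have "g \<in> (\<lambda>i. Q i j mod int n) ` {0..<n}" using columns[of j] g by simp
    then obtain i where "i < n" "Q i j mod int n = g" by auto
    then show ?thesis using zero_column[of i] right by (intro exI[of _ i]) auto
  next
    case left
    then have "j' < k - 1" using j by auto
    then have "g \<in> (\<lambda>i. (- Q i j') mod int n) ` {0..<n}"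
      using image_uminus_mod[OF columns uminus_mod_image_all] g by simp
    then obtain i where "i < n" "(- Q i j') mod int n = g" by auto
    then show ?thesis using zero_column[of i] left by (intro exI[of _ i]) auto
  qed
qed

lemma DCA_P1_of_columns:
  assumes normalized: "DCA_normalized k n Q" and "0 < n"
    and bounds: "\<And>i j. i < n + 1 \<Longrightarrow> j < k \<Longrightarrow> 0 \<le> Q i j \<and> Q i j < int n"
    and columns: "\<And>j. j < k - 1 \<Longrightarrow> (\<lambda>i. Q i j mod int n) ` {0..<n} = {0..<int n}"
  shows "DCA_P1 k n Q"
  unfolding DCA_P1_def
proof (intro allI impI)
  fix j assume "j < k"
  obtain i where i: "i < n" "Q i j = 0"
  proof (cases "j = k - 1")
    case True
    then show ?thesis using that normalized \<open>0 < n\<close> by (auto simp: DCA_normalized_def)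
  next
    case False
    then have "0 \<in> (\<lambda>i. Q i j mod int n) ` {0..<n}" using columns[of j] \<open>j < k\<close> \<open>0 < n\<close> by auto
    then obtain i where "i < n" "Q i j mod int n = 0" by auto
    then show ?thesis using that bounds[of i j] \<open>j < k\<close> by auto
  qed
  have "{i, n} \<subseteq> {i. i < n + 1 \<and> Q i j = 0}"
    using i normalized \<open>j < k\<close> by (auto simp: DCA_normalized_def)
  from card_mono[OF _ this] show "2 \<le> card {i. i < n + 1 \<and> Q i j = 0}"
    using i by simp
qed

lemma mod_eq_of_dvd_diff:
  fixes x d m :: int
  assumes "0 \<le> d" "d < m" "m dvd (x - d)"
  shows "x mod m = d"
  using assms by (simp add: mod_eq_dvd_iff[symmetric])

lemma dvd_below_three_multiples:
  fixes x m :: int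
  assumes "0 < m" "m dvd x" "0 \<le> x" "x < 3*m"
  shows "x = 0 \<or> x = m \<or> x = 2*m"
proof -
  obtain q where q: "x = m * q" using assms(2) by (auto simp: dvd_def)
  have "0 \<le> q" using q assms(1,3) by (simp add: zero_le_mult_iff)
  moreover have "q < 3" using q assms(1,4) by (metis mult.commute mult_less_cancel_left_pos)
  ultimately have "q = 0 \<or> q = 1 \<or> q = 2" by auto
  then show ?thesis using q by auto
qed

definition beta :: "int \<Rightarrow> int \<Rightarrow> int \<Rightarrow> int" where
  "beta mu s u = (if even u \<and> (s = 0 \<or> u \<noteq> 3*mu + 1) then 1 else 0)"

definition gamma :: "int \<Rightarrow> int \<Rightarrow> int \<Rightarrow> int" where
  "gamma mu s u = (if s = 0 then (if even u = (mu \<le> u \<and> u \<le> 2*mu) then 0 else 1)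
     else if u = 3*mu + 1 then 1 else if odd u = (mu \<le> u \<and> u \<le> 2*mu - 1) then 0 else 1)"

definition col_parity :: "int \<Rightarrow> nat \<Rightarrow> int \<Rightarrow> int \<Rightarrow> int" where
  "col_parity mu j = (if j = 0 then (\<lambda>s u. s) else if j = 1 then beta mu else gamma mu)"

definition col_residue :: "int \<Rightarrow> nat \<Rightarrow> int \<Rightarrow> int \<Rightarrow> int" where
  "col_residue mu j = (if j = 0 then (\<lambda>s u. u) else if j = 1 then (\<lambda>s u. 2*u + 2*s)
     else (\<lambda>s u. 3*u + mu + 2 + 2*s))"

definition dca_array :: "int \<Rightarrow> nat \<Rightarrow> nat \<Rightarrow> int" where
  "dca_array mu i j = (let m = 3*mu + 2; s = int i div m; u = int i mod m in
     if int i < 2*m \<and> j < 3 then crt_lift m (col_parity mu j s u) (col_residue mu j s u) else 0)"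

context
  fixes mu m :: int
  assumes mu_odd: "odd mu" and mu_pos: "0 < mu" and m_eq: "m = 3*mu + 2"
begin

lemma m_pos: "0 < m"
  using mu_pos m_eq by simp

lemma m_odd: "odd m"
  using mu_odd m_eq by simp

lemma sheet_pairs_col0: "sheet_pairs m (\<lambda>s u. s) (\<lambda>s u. u) = {0,1} \<times> {0..<m}"
proof (rule sheet_pairs_eq_allI[OF m_pos])
  fix z d :: int assume "z \<in> {0,1}" "0 \<le> d" "d < m"
  then show "(z, d) \<in> sheet_pairs m (\<lambda>s u. s) (\<lambda>s u. u)"
    using sheet_pairs_memI[of z d m "\<lambda>s u. s" "\<lambda>s u. u"] by auto
qed

lemma sheet_pairs_col1: "sheet_pairs m (beta mu) (\<lambda>s u. 2*u + 2*s) = {0,1} \<times> {0..<m}"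
proof (rule sheet_pairs_eq_allI[OF m_pos])
  fix z d :: int assume z: "z \<in> {0,1}" and d: "0 \<le> d" "d < m"
  obtain u0 where u0: "0 \<le> u0" "u0 < m" "2*u0 - d = 0 \<or> 2*u0 - d = m"
  proof (cases "even d")
    case True
    then show ?thesis using d that[of "d div 2"] by auto
  next
    case False
    then have "even (d + m)" using m_odd by simp
    then show ?thesis using d that[of "(d + m) div 2"] by auto
  qed
  define u1 where "u1 = (if u0 = 0 then m - 1 else u0 - 1)"
  show "(z, d) \<in> sheet_pairs m (beta mu) (\<lambda>s u. 2*u + 2*s)"
  proof (rule two_sheet_cover[OF z, where u = u0 and u' = u1])
    show "0 \<le> u1" "u1 < m" using u0 m_pos unfolding u1_def by auto
    show "(2*u0 + 2*0) mod m = d"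
      using u0 d by (intro mod_eq_of_dvd_diff) auto
    have "2*u1 + 2*1 - d = (2*u0 - d) + m * (if u0 = 0 then 2 else 0)"
      unfolding u1_def by auto
    then show "(2*u1 + 2*1) mod m = d"
      using u0 d by (intro mod_eq_of_dvd_diff) auto
    show "beta mu 0 u0 mod 2 \<noteq> beta mu 1 u1 mod 2"
      using u0 m_odd m_eq unfolding beta_def u1_def by auto
  qed (use u0 in auto)
qed

lemma sheet_pairs_col2: "sheet_pairs m (gamma mu) (\<lambda>s u. 3*u + mu + 2 + 2*s) = {0,1} \<times> {0..<m}"
proof (rule sheet_pairs_eq_allI[OF m_pos])
  fix z d :: int assume z: "z \<in> {0,1}" and d: "0 \<le> d" "d < m"
  \<comment> \<open>\<open>\<mu> + 1\<close> is the inverse of 3 modulo \<open>m\<close>\<close>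
  define y where "y = (d - mu - 2) * (mu + 1)"
  define u0 where "u0 = y mod m"
  define u1 where "u1 = (if u0 + mu < m then u0 + mu else u0 + mu - m)"
  have u0: "0 \<le> u0" "u0 < m" using m_pos unfolding u0_def by auto
  have residue0: "3*u0 + mu + 2 + 2*0 - d = m * ((d - mu - 2) - 3 * (y div m))"
    using div_mult_mod_eq[of y m] unfolding u0_def y_def m_eq by (simp add: algebra_simps)
  show "(z, d) \<in> sheet_pairs m (gamma mu) (\<lambda>s u. 3*u + mu + 2 + 2*s)"
  proof (rule two_sheet_cover[OF z, where u = u0 and u' = u1])
    show "0 \<le> u1" "u1 < m" using u0 mu_pos m_eq unfolding u1_def by auto
    show "(3*u0 + mu + 2 + 2*0) mod m = d"
      using residue0 d by (intro mod_eq_of_dvd_diff) auto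
    have "3*u1 + mu + 2 + 2*1 - d = m * ((d - mu - 2) - 3 * (y div m) + (if u0 + mu < m then 1 else -2))"
      using residue0 m_eq unfolding u1_def by (auto simp: algebra_simps)
    then show "(3*u1 + mu + 2 + 2*1) mod m = d"
      using d by (intro mod_eq_of_dvd_diff) auto
    show "gamma mu 0 u0 mod 2 \<noteq> gamma mu 1 u1 mod 2"
      using u0 mu_odd mu_pos m_eq unfolding gamma_def u1_def
      by (cases "u0 < mu"; cases "u0 \<le> 2*mu"; cases "u0 = 2*mu + 1") (simp_all split: if_splits)
  qed (use u0 in auto)
qed

lemma sheet_pairs_diff01_cover:
  assumes "z \<in> {0,1}" "0 < d" "d < m"
  shows "(z, d) \<in> sheet_pairs m (\<lambda>s u. s - beta mu s u) (\<lambda>s u. - u - 2*s)"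
proof -
  define u0 where "u0 = m - d"
  define u1 where "u1 = (if 2 \<le> u0 then u0 - 2 else u0 - 2 + m)"
  show ?thesis
  proof (rule two_sheet_cover[OF assms(1), where u = u0 and u' = u1])
    show "0 \<le> u0" "u0 < m" "0 \<le> u1" "u1 < m"
      using assms m_eq unfolding u0_def u1_def by auto
    show "(- u0 - 2*0) mod m = d"
      using assms unfolding u0_def by (intro mod_eq_of_dvd_diff) auto
    have "- u1 - 2*1 - d = m * (if 2 \<le> u0 then -1 else -2)"
      unfolding u1_def u0_def by auto
    then show "(- u1 - 2*1) mod m = d"
      using assms by (intro mod_eq_of_dvd_diff) auto
    have "beta mu 0 u0 = beta mu 1 u1"
      using assms(2,3) m_odd unfolding beta_def u0_def u1_def m_eq by auto presburger
    then show "(0 - beta mu 0 u0) mod 2 \<noteq> (1 - beta mu 1 u1) mod 2"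
      by presburger
  qed
qed

lemma sheet_pairs_diff01:
  "sheet_pairs m (\<lambda>s u. s - beta mu s u) (\<lambda>s u. - u - 2*s) = {0,1} \<times> {0..<m} - {(0, 0)}"
proof (rule sheet_pairs_eq_nonzeroI[OF m_pos _ _ sheet_pairs_diff01_cover])
  fix s u :: int assume s: "s \<in> {0,1}" and u: "0 \<le> u" "u < m"
  show "(s - beta mu s u) mod 2 \<noteq> 0 \<or> (- u - 2*s) mod m \<noteq> 0"
  proof (rule ccontr)
    assume "\<not> ?thesis"
    then have parity: "(s - beta mu s u) mod 2 = 0" and "m dvd (u + 2*s)"
      using dvd_minus_iff[of m "u + 2*s"] by (auto simp: dvd_eq_mod_eq_0)
    then have "u + 2*s = 0 \<or> u + 2*s = m \<or> u + 2*s = 2*m"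
      using s u m_pos by (intro dvd_below_three_multiples) auto
    then have "(s = 0 \<and> u = 0) \<or> (s = 1 \<and> u = m - 2)"
      using s u m_eq mu_pos by auto
    then show False
      using parity m_odd unfolding beta_def m_eq by auto
  qed
next
  show "(1, 0) \<in> sheet_pairs m (\<lambda>s u. s - beta mu s u) (\<lambda>s u. - u - 2*s)"
    using m_pos sheet_pairs_memI[of 0 0 m "\<lambda>s u. s - beta mu s u" "\<lambda>s u. - u - 2*s"]
    by (simp add: beta_def)
qed

lemma sheet_pairs_diff02_cover:
  assumes "z \<in> {0,1}" "0 < d" "d < m"
  shows "(z, d) \<in> sheet_pairs m (\<lambda>s u. s - gamma mu s u) (\<lambda>s u. - 2*u - mu - 2 - 2*s)"
proof -
  \<comment> \<open>\<open>-c\<close> is the inverse of \<open>2\<close> modulo \<open>m\<close>\<close>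
  define c where "c = (3*mu + 1) div 2"
  have c: "2*c = m - 1" unfolding c_def m_eq using mu_odd by presburger
  define y where "y = c * (d + mu + 2)"
  define u0 where "u0 = y mod m"
  define u1 where "u1 = (if u0 = 0 then m - 1 else u0 - 1)"
  have u0: "0 \<le> u0" "u0 < m" using m_pos unfolding u0_def by auto
  have "u0 = y - y div m * m"
    unfolding u0_def using div_mult_mod_eq[of y m] by linarith
  then have "- 2*u0 - mu - 2 - 2*0 - d = - (2*c) * (d + mu + 2) + 2 * (y div m) * m - (d + mu + 2)"
    unfolding y_def by (simp add: algebra_simps)
  also have "\<dots> = m * (2 * (y div m) - (d + mu + 2))"
    unfolding c by (simp add: algebra_simps)
  finally have residue0: "- 2*u0 - mu - 2 - 2*0 - d = m * (2 * (y div m) - (d + mu + 2))" .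
  have "u0 \<noteq> mu"
  proof
    assume "u0 = mu"
    then have "- 2*u0 - mu - 2 - 2*0 - d = - (d + m)" using m_eq by simp
    then have "m dvd d + m" using residue0 dvd_minus_iff[of m "d + m"] by (metis dvd_triv_left)
    then show False using assms zdvd_not_zless[of d m] by simp
  qed
  show ?thesis
  proof (rule two_sheet_cover[OF assms(1), where u = u0 and u' = u1])
    show "0 \<le> u1" "u1 < m" using u0 m_pos unfolding u1_def by auto
    show "(- 2*u0 - mu - 2 - 2*0) mod m = d"
      using residue0 assms by (intro mod_eq_of_dvd_diff) auto
    have "- 2*u1 - mu - 2 - 2*1 - d = m * (2 * (y div m) - (d + mu + 2) + (if u0 = 0 then -2 else 0))"
      using residue0 unfolding u1_def by (auto simp: algebra_simps)
    then show "(- 2*u1 - mu - 2 - 2*1) mod m = d"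
      using assms by (intro mod_eq_of_dvd_diff) auto
    have "gamma mu 0 u0 = gamma mu 1 u1"
      using u0 \<open>u0 \<noteq> mu\<close> mu_odd mu_pos m_eq unfolding gamma_def u1_def
      by (cases "u0 < mu"; cases "u0 \<le> 2*mu"; cases "u0 = 2*mu + 1"; cases "u0 = 0") (simp_all split: if_splits)
    then show "(0 - gamma mu 0 u0) mod 2 \<noteq> (1 - gamma mu 1 u1) mod 2"
      by presburger
  qed (use u0 in auto)
qed

lemma sheet_pairs_diff02:
  "sheet_pairs m (\<lambda>s u. s - gamma mu s u) (\<lambda>s u. - 2*u - mu - 2 - 2*s) = {0,1} \<times> {0..<m} - {(0, 0)}"
proof (rule sheet_pairs_eq_nonzeroI[OF m_pos _ _ sheet_pairs_diff02_cover])
  fix s u :: int assume s: "s \<in> {0,1}" and u: "0 \<le> u" "u < m"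
  show "(s - gamma mu s u) mod 2 \<noteq> 0 \<or> (- 2*u - mu - 2 - 2*s) mod m \<noteq> 0"
  proof (rule ccontr)
    assume "\<not> ?thesis"
    then have parity: "(s - gamma mu s u) mod 2 = 0" and "m dvd (2*u + mu + 2 + 2*s)"
      using dvd_minus_iff[of m "2*u + mu + 2 + 2*s"] by (auto simp: dvd_eq_mod_eq_0)
    then have "2*u + mu + 2 + 2*s = 0 \<or> 2*u + mu + 2 + 2*s = m \<or> 2*u + mu + 2 + 2*s = 2*m"
      using s u m_eq mu_pos by (intro dvd_below_three_multiples[OF m_pos]) auto
    then have "(s = 0 \<and> u = mu) \<or> (s = 1 \<and> u = mu - 1)"
      using s u mu_pos mu_odd m_eq by auto presburger+
    then show False
      using parity mu_odd mu_pos unfolding gamma_def by auto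
  qed
next
  have "- 2*mu - mu - 2 - 2*0 = - m" using m_eq by simp
  then show "(1, 0) \<in> sheet_pairs m (\<lambda>s u. s - gamma mu s u) (\<lambda>s u. - 2*u - mu - 2 - 2*s)"
    using mu_pos mu_odd m_pos
      sheet_pairs_memI[of 0 mu m "\<lambda>s u. s - gamma mu s u" "\<lambda>s u. - 2*u - mu - 2 - 2*s"]
    by (simp add: gamma_def)
qed

lemma sheet_pairs_diff12_cover:
  assumes "z \<in> {0,1}" "0 < d" "d < m"
  shows "(z, d) \<in> sheet_pairs m (\<lambda>s u. beta mu s u - gamma mu s u) (\<lambda>s u. - u - mu - 2)"
proof -
  define u0 where "u0 = (if d + mu + 2 \<le> m then m - (d + mu + 2) else 2*m - (d + mu + 2))"
  have u0: "0 \<le> u0" "u0 < m" using assms mu_pos m_eq unfolding u0_def by auto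
  have residue0: "- u0 - mu - 2 - d = m * (if d + mu + 2 \<le> m then -1 else -2)"
    unfolding u0_def by auto
  have "u0 \<noteq> 2*mu"
    using assms m_eq unfolding u0_def by (auto split: if_splits)
  show ?thesis
  proof (rule two_sheet_cover[OF assms(1), where u = u0 and u' = u0])
    show "(- u0 - mu - 2) mod m = d"
      using residue0 assms by (intro mod_eq_of_dvd_diff) auto
    show "(beta mu 0 u0 - gamma mu 0 u0) mod 2 \<noteq> (beta mu 1 u0 - gamma mu 1 u0) mod 2"
      using u0 \<open>u0 \<noteq> 2*mu\<close> mu_odd mu_pos m_eq unfolding gamma_def beta_def
      by (cases "u0 < mu"; cases "u0 \<le> 2*mu"; cases "u0 = 3*mu + 1") (simp_all split: if_splits)
  qed (use u0 residue0 assms in \<open>auto intro: mod_eq_of_dvd_diff\<close>)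
qed

lemma sheet_pairs_diff12:
  "sheet_pairs m (\<lambda>s u. beta mu s u - gamma mu s u) (\<lambda>s u. - u - mu - 2) = {0,1} \<times> {0..<m} - {(0, 0)}"
proof (rule sheet_pairs_eq_nonzeroI[OF m_pos _ _ sheet_pairs_diff12_cover])
  fix s u :: int assume s: "s \<in> {0,1}" and u: "0 \<le> u" "u < m"
  show "(beta mu s u - gamma mu s u) mod 2 \<noteq> 0 \<or> (- u - mu - 2) mod m \<noteq> 0"
  proof (rule ccontr)
    assume "\<not> ?thesis"
    then have parity: "(beta mu s u - gamma mu s u) mod 2 = 0" and "m dvd (u + mu + 2)"
      using dvd_minus_iff[of m "u + mu + 2"] by (auto simp: dvd_eq_mod_eq_0)
    then have "u + mu + 2 = 0 \<or> u + mu + 2 = m \<or> u + mu + 2 = 2*m"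
      using u m_eq mu_pos by (intro dvd_below_three_multiples[OF m_pos]) auto
    then have "u = 2*mu"
      using u mu_pos m_eq by auto
    then show False
      using parity s mu_pos unfolding gamma_def beta_def by auto
  qed
next
  have "- (2*mu) - mu - 2 = - m" using m_eq by simp
  then show "(1, 0) \<in> sheet_pairs m (\<lambda>s u. beta mu s u - gamma mu s u) (\<lambda>s u. - u - mu - 2)"
    using mu_pos mu_odd m_pos
      sheet_pairs_memI[of 0 "2*mu" m "\<lambda>s u. beta mu s u - gamma mu s u" "\<lambda>s u. - u - mu - 2"]
    by (simp add: beta_def gamma_def)
qed

lemma sheet_pairs_col:
  assumes "j < 3"
  shows "sheet_pairs m (col_parity mu j) (col_residue mu j) = {0,1} \<times> {0..<m}"
proof -
  consider "j = 0" | "j = 1" | "j = 2" using assms by linarith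
  then show ?thesis
  proof cases
    case 1
    then show ?thesis using sheet_pairs_col0 by (simp add: col_parity_def col_residue_def)
  next
    case 2
    then show ?thesis using sheet_pairs_col1 by (simp add: col_parity_def col_residue_def)
  next
    case 3
    then show ?thesis using sheet_pairs_col2 by (simp add: col_parity_def col_residue_def)
  qed
qed

lemma sheet_pairs_diff:
  assumes "j < j'" "j' < 3"
  shows "sheet_pairs m (\<lambda>s u. col_parity mu j s u - col_parity mu j' s u)
      (\<lambda>s u. col_residue mu j s u - col_residue mu j' s u) = {0,1} \<times> {0..<m} - {(0, 0)}"
proof -
  consider "j = 0" "j' = 1" | "j = 0" "j' = 2" | "j = 1" "j' = 2" using assms by linarith
  then show ?thesis
  proof cases
    case 1
    have "(\<lambda>s u. u - (2*u + 2*s)) = (\<lambda>s u :: int. - u - 2*s)" by (simp add: fun_eq_iff)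
    then show ?thesis using 1 sheet_pairs_diff01 by (simp add: col_parity_def col_residue_def)
  next
    case 2
    have "(\<lambda>s u. u - (3*u + mu + 2 + 2*s)) = (\<lambda>s u :: int. - 2*u - mu - 2 - 2*s)" by (simp add: fun_eq_iff)
    then show ?thesis using 2 sheet_pairs_diff02 by (simp add: col_parity_def col_residue_def)
  next
    case 3
    have "(\<lambda>s u. 2*u + 2*s - (3*u + mu + 2 + 2*s)) = (\<lambda>s u :: int. - u - mu - 2)" by (simp add: fun_eq_iff)
    then show ?thesis using 3 sheet_pairs_diff12 by (simp add: col_parity_def col_residue_def)
  qed
qed

lemma dca_array_components:
  assumes "int i < 2*m" "j < 3"
  shows "dca_array mu i j mod 2 = col_parity mu j (int i div m) (int i mod m) mod 2"
    and "dca_array mu i j mod m = col_residue mu j (int i div m) (int i mod m) mod m"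
  using assms crt_lift(3,4)[OF m_odd m_pos]
  unfolding dca_array_def Let_def m_eq[symmetric] by simp_all

lemma dca_array_bounds: "0 \<le> dca_array mu i j" "dca_array mu i j < 2*m"
  using crt_lift(1,2)[OF m_odd m_pos] m_pos
  unfolding dca_array_def Let_def m_eq[symmetric] by auto

lemma dca_array_column_image:
  assumes "j < 3"
  shows "(\<lambda>i. dca_array mu i j mod (2*m)) ` {i. int i < 2*m} = {0..<2*m}"
  using dca_array_components[OF _ assms]
  by (intro image_mod_double_rows_all[OF m_odd m_pos _ sheet_pairs_col[OF assms]]) auto

lemma dca_array_diff_image:
  assumes "j < 3" "j' < 3" "j \<noteq> j'"
  shows "(\<lambda>i. (dca_array mu i j - dca_array mu i j') mod (2*m)) ` {i. int i < 2*m} = {1..<2*m}"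
proof -
  have ordered: "(\<lambda>i. (dca_array mu i j - dca_array mu i j') mod (2*m)) ` {i. int i < 2*m} = {1..<2*m}"
    if "j < j'" "j' < 3" for j j'
  proof (rule image_mod_double_rows_nonzero[OF m_odd m_pos _ sheet_pairs_diff[OF that]])
    fix i assume i: "int i < 2*m"
    have "j < 3" using that by simp
    show "(dca_array mu i j - dca_array mu i j') mod 2
          = (col_parity mu j (int i div m) (int i mod m) - col_parity mu j' (int i div m) (int i mod m)) mod 2
        \<and> (dca_array mu i j - dca_array mu i j') mod m
          = (col_residue mu j (int i div m) (int i mod m) - col_residue mu j' (int i div m) (int i mod m)) mod m"
      by (intro conjI mod_diff_cong dca_array_components i \<open>j < 3\<close> \<open>j' < 3\<close>)
  qed
  show ?thesis
  proof (cases "j < j'")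
    case True
    then show ?thesis using ordered assms(2) by blast
  next
    case False
    then have "j' < j" using assms(3) by simp
    from image_uminus_mod[OF ordered[OF this assms(1)] uminus_mod_image_nonzero] show ?thesis
      by simp
  qed
qed

end

theorem mainTheorem4:
  fixes \<mu> :: nat
  assumes "odd \<mu>" and "\<mu> > 0"
  shows "\<exists>Q. cyclic_DCA 4 (6*\<mu>+5) (6*\<mu>+4) Q \<and> DCA_normalized 4 (6*\<mu>+4) Q
             \<and> DCA_P1 4 (6*\<mu>+4) Q \<and> DCA_P2 4 (6*\<mu>+4) Q"
proof (intro exI conjI)
  let ?Q = "dca_array (int \<mu>)" and ?m = "3 * int \<mu> + 2"
  have mu: "odd (int \<mu>)" "0 < int \<mu>" using assms by auto
  have n: "int (6*\<mu>+4) = 2 * ?m" and rows: "{0..<6*\<mu>+4} = {i. int i < 2 * ?m}" by auto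
  show normalized: "DCA_normalized 4 (6*\<mu>+4) ?Q"
    by (simp add: DCA_normalized_def dca_array_def)
  show P2: "DCA_P2 4 (6*\<mu>+4) ?Q"
    unfolding DCA_P2_def n rows using dca_array_diff_image[OF mu refl] by simp
  have bounds: "0 \<le> ?Q i j \<and> ?Q i j < int (6*\<mu>+4)" for i j
    unfolding n using dca_array_bounds[OF mu refl] by simp
  have columns: "(\<lambda>i. ?Q i j mod int (6*\<mu>+4)) ` {0..<6*\<mu>+4} = {0..<int (6*\<mu>+4)}" if "j < 4 - 1" for j
    unfolding n rows using dca_array_column_image[OF mu refl] that by simp
  have "6*\<mu>+5 = (6*\<mu>+4) + 1" by simp
  then show "cyclic_DCA 4 (6*\<mu>+5) (6*\<mu>+4) ?Q"
    using cyclic_DCA_of_normalized_P2[OF normalized P2 bounds columns] by (simp only:)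
  show "DCA_P1 4 (6*\<mu>+4) ?Q"
    using DCA_P1_of_columns[OF normalized _ bounds columns] by simp
qed

end
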